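(* In the one-parameter family of $SU(2)$-invariant hyperKähler structures on the non-zero nilpotent orbit $\mathcal O\subset\mathfrak{sl}(2,\mathbb C)$ with complex symplectic form $k^2\omega_c^{\mathcal O}$ and Kähler potential $\rho$ satisfying $\rho'(\eta)=\frac1\eta\sqrt{k^2\eta+c}$ ($c\ge0$), the Kähler potential $\rho$ is a hyperKähler potential if and only if $c=0$. In that case, up to an additive constant, $\rho=2k\sqrt\eta$, and $\rho(te)=4k^2t$ for $t>0$.
   Context: $\langle\cdot,\cdot\rangle_{\mathfrak{sl}(2)}$ is the negative Killing form of $\mathfrak{sl}(2,\mathbb C)$, $\sigma(X)=-\bar X^T$, $\eta(X)=k^2\langle X,\sigma X\rangle_{\mathfrak{sl}(2)}$, $e=\begin{pmatrix}0&1\\0&0\end{pmatrix}$. $\xi_A=[A,X]$, $I\xi_A=\xi_{iA}$, $\omega_c^{\mathcal O}(\xi_A,\xi_B)_X=\langle X,[A,B]\rangle_{\mathfrak{sl}(2)}$, and the complex symplectic form is $\omega_J+i\omega_K=k^2\omega_c^{\mathcal O}$. A hyperKähler potential is a function $\rho$ that is simultaneously a Kähler potential for $I$, $J$ and $K$, i.e. $\omega_L=-\tfrac12 dLd\rho$ for $L=I,J,K$ (with $(L\alpha)(Y)=-\alpha(LY)$). *)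

theory Defs
  imports "HOL-Analysis.Analysis"
begin

type_synonym mat2 = "complex^2^2"

definition cmul :: "complex \<Rightarrow> mat2 \<Rightarrow> mat2" where
  "cmul a M = (\<chi> i j. a * M$i$j)"

definition commut :: "mat2 \<Rightarrow> mat2 \<Rightarrow> mat2" where
  "commut A B = A ** B - B ** A"

definition sl2 :: "mat2 set" where
  "sl2 = {A. trace A = 0}"

text \<open>Negative Killing form of sl(2,C): the Killing form is B(X,Y) = tr(ad X ad Y) = 4 tr(XY).\<close>
definition kill_neg :: "mat2 \<Rightarrow> mat2 \<Rightarrow> complex" where
  "kill_neg X Y = - 4 * trace (X ** Y)"

definition sigma :: "mat2 \<Rightarrow> mat2" where
  "sigma X = (\<chi> i j. - cnj (X$j$i))"

definition eta :: "real \<Rightarrow> mat2 \<Rightarrow> real" where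
  "eta k X = k\<^sup>2 * Re (kill_neg X (sigma X))"

definition e_mat :: mat2 where
  "e_mat = (\<chi> i j. if i = 1 \<and> j = 2 then 1 else 0)"

definition nilorb :: "mat2 set" where
  "nilorb = {X. X \<in> sl2 \<and> X \<noteq> 0 \<and> X ** X = 0}"

definition xi :: "mat2 \<Rightarrow> mat2 \<Rightarrow> mat2" where
  "xi A X = commut A X"

definition tang :: "mat2 \<Rightarrow> mat2 set" where
  "tang X = {xi A X | A. A \<in> sl2}"

definition tgen :: "mat2 \<Rightarrow> mat2 \<Rightarrow> mat2" where
  "tgen X Y = (SOME A. A \<in> sl2 \<and> xi A X = Y)"

definition tderiv :: "(mat2 \<Rightarrow> real) \<Rightarrow> mat2 \<Rightarrow> mat2 \<Rightarrow> real" where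
  "tderiv h X V = (THE v. \<forall>\<gamma>. range \<gamma> \<subseteq> nilorb \<and> \<gamma> 0 = X \<and> (\<gamma> has_vector_derivative V) (at 0)
       \<longrightarrow> ((h \<circ> \<gamma>) has_real_derivative v) (at 0))"

text \<open>Lie bracket of (ambient) vector fields, [Y,Z]f = Y(Zf) - Z(Yf).\<close>
definition lie_bracket :: "(mat2 \<Rightarrow> mat2) \<Rightarrow> (mat2 \<Rightarrow> mat2) \<Rightarrow> mat2 \<Rightarrow> mat2" where
  "lie_bracket Y Z X = frechet_derivative Z (at X) (Y X) - frechet_derivative Y (at X) (Z X)"

text \<open>Exterior derivative of a 1-form alpha (alpha X V = value at point X on tangent vector V),
  evaluated on vector fields: d alpha(Y,Z) = Y(alpha Z) - Z(alpha Y) - alpha([Y,Z]).\<close>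
definition ext_d :: "(mat2 \<Rightarrow> mat2 \<Rightarrow> real) \<Rightarrow> (mat2 \<Rightarrow> mat2) \<Rightarrow> (mat2 \<Rightarrow> mat2) \<Rightarrow> mat2 \<Rightarrow> real" where
  "ext_d \<alpha> Y Z X = tderiv (\<lambda>p. \<alpha> p (Z p)) X (Y X) - tderiv (\<lambda>p. \<alpha> p (Y p)) X (Z X)
      - \<alpha> X (lie_bracket Y Z X)"

text \<open>A 2-form given on fundamental vector fields, evaluated on tangent vectors Y, Z at X.\<close>
definition dform :: "(mat2 \<Rightarrow> mat2 \<Rightarrow> real) \<Rightarrow> mat2 \<Rightarrow> mat2 \<Rightarrow> mat2 \<Rightarrow> real" where
  "dform \<alpha> X Y Z = ext_d \<alpha> (xi (tgen X Y)) (xi (tgen X Z)) X"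

definition Ldrho :: "(mat2 \<Rightarrow> mat2 \<Rightarrow> mat2) \<Rightarrow> (mat2 \<Rightarrow> real) \<Rightarrow> mat2 \<Rightarrow> mat2 \<Rightarrow> real" where
  "Ldrho L \<rho> X V = - tderiv \<rho> X (L X V)"

text \<open>Complex structure I: I xi_A = xi_{iA}, i.e. multiplication by i.\<close>
definition Iop :: "mat2 \<Rightarrow> mat2 \<Rightarrow> mat2" where
  "Iop X V = cmul \<i> V"

definition omegaI :: "(mat2 \<Rightarrow> real) \<Rightarrow> mat2 \<Rightarrow> mat2 \<Rightarrow> mat2 \<Rightarrow> real" where
  "omegaI \<rho> X Y Z = - 1/2 * dform (Ldrho Iop \<rho>) X Y Z"

text \<open>Metric g with omega_L(Y,Z) = g(Y, L Z).\<close>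
definition gmet :: "(mat2 \<Rightarrow> real) \<Rightarrow> mat2 \<Rightarrow> mat2 \<Rightarrow> mat2 \<Rightarrow> real" where
  "gmet \<rho> X Y Z = omegaI \<rho> X (Iop X Y) Z"

text \<open>omega_J + i omega_K = k^2 omega_c, omega_c(xi_A,xi_B)_X = <X,[A,B]>.\<close>
definition omegac :: "mat2 \<Rightarrow> mat2 \<Rightarrow> mat2 \<Rightarrow> complex" where
  "omegac X Y Z = kill_neg X (commut (tgen X Y) (tgen X Z))"

definition omegaJ :: "real \<Rightarrow> mat2 \<Rightarrow> mat2 \<Rightarrow> mat2 \<Rightarrow> real" where
  "omegaJ k X Y Z = Re (of_real (k\<^sup>2) * omegac X Y Z)"

definition omegaK :: "real \<Rightarrow> mat2 \<Rightarrow> mat2 \<Rightarrow> mat2 \<Rightarrow> real" where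
  "omegaK k X Y Z = Im (of_real (k\<^sup>2) * omegac X Y Z)"

definition Lop :: "(mat2 \<Rightarrow> mat2 \<Rightarrow> mat2 \<Rightarrow> real) \<Rightarrow> (mat2 \<Rightarrow> real) \<Rightarrow> mat2 \<Rightarrow> mat2 \<Rightarrow> mat2" where
  "Lop \<omega> \<rho> X Y = (THE W. W \<in> tang X \<and> (\<forall>Z\<in>tang X. gmet \<rho> X Z W = \<omega> X Z Y))"

definition Jop :: "real \<Rightarrow> (mat2 \<Rightarrow> real) \<Rightarrow> mat2 \<Rightarrow> mat2 \<Rightarrow> mat2" where
  "Jop k \<rho> = Lop (omegaJ k) \<rho>"

definition Kop :: "real \<Rightarrow> (mat2 \<Rightarrow> real) \<Rightarrow> mat2 \<Rightarrow> mat2 \<Rightarrow> mat2" where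
  "Kop k \<rho> = Lop (omegaK k) \<rho>"

definition kahler_pot_for :: "(mat2 \<Rightarrow> mat2 \<Rightarrow> mat2 \<Rightarrow> real) \<Rightarrow> (mat2 \<Rightarrow> mat2 \<Rightarrow> mat2) \<Rightarrow> (mat2 \<Rightarrow> real) \<Rightarrow> bool" where
  "kahler_pot_for \<omega> L \<rho> \<longleftrightarrow>
     (\<forall>X\<in>nilorb. \<forall>Y\<in>tang X. \<forall>Z\<in>tang X. \<omega> X Y Z = - 1/2 * dform (Ldrho L \<rho>) X Y Z)"

definition hk_potential :: "real \<Rightarrow> (mat2 \<Rightarrow> real) \<Rightarrow> bool" where
  "hk_potential k \<rho> \<longleftrightarrow> kahler_pot_for (omegaI \<rho>) Iop \<rho>
      \<and> kahler_pot_for (omegaJ k) (Jop k \<rho>) \<rho> \<and> kahler_pot_for (omegaK k) (Kop k \<rho>) \<rho>"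

end

theory Submission
  imports Defs
begin

text \<open>Every point of the orbit is \<open>X = (u,v)\<^sup>T (v,-u)\<close> with \<open>(u,v) \<noteq> 0\<close>, and since
  \<open>\<rho> = f(\<eta>)\<close> with \<open>\<eta> = 4 k\<^sup>2 |X|\<^sup>2\<close>, everything can be computed explicitly. In the coordinates
  of tangent vectors, the metric \<open>g(Y,Z) = \<omega>\<^sub>I(I Y, Z)\<close> is the real part of a positive Hermitian
  form \<open>a I + b w w\<^sup>*\<close>, so the complex structures \<open>J, K\<close> defined by \<open>\<omega>\<^sub>J + i \<omega>\<^sub>K = k\<^sup>2 \<omega>\<^sub>c\<close> exist,
  and pairing with \<open>X\<close> gives \<open>(L d\<rho>)(\<xi>\<^sub>C) = \<psi>(\<eta>) Re (\<mu> tr (C X))\<close> with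
  \<open>\<psi>(\<eta>) = -8 (k\<^sup>2 \<eta> + c) / \<eta>\<close> (\<open>\<mu> = 1\<close> for \<open>J\<close>, \<open>\<mu> = -i\<close> for \<open>K\<close>). Then \<open>-d(L d\<rho>)/2\<close> differs
  from \<open>\<omega>\<^sub>L\<close> by \<open>(c/\<eta>) Re (\<mu> \<omega>\<^sub>c)\<close> plus a term in \<open>\<psi>'(\<eta>) = 8c/\<eta>\<^sup>2\<close> that vanishes on vectors
  orthogonal to \<open>X\<close>; so \<open>\<rho>\<close> is a hyperKaehler potential exactly when \<open>c = 0\<close>. Then
  \<open>f' = k / \<surd>\<eta>\<close> integrates to \<open>f = 2 k \<surd>\<eta> + C\<close>, and \<open>\<eta>(t e) = 4 k\<^sup>2 t\<^sup>2\<close>.\<close>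

section \<open>Two-by-two matrices\<close>

definition mat2_of :: "complex \<Rightarrow> complex \<Rightarrow> complex \<Rightarrow> complex \<Rightarrow> mat2" where
  "mat2_of a b c d = (\<chi> i j. if i = 1 then (if j = 1 then a else b) else (if j = 1 then c else d))"

lemma mat2_of_nth [simp]:
  "mat2_of a b c d $ 1 $ 1 = a" "mat2_of a b c d $ 1 $ 2 = b"
  "mat2_of a b c d $ 2 $ 1 = c" "mat2_of a b c d $ 2 $ 2 = d"
  by (simp_all add: mat2_of_def)

lemma mat2_eq_iff: "(A::mat2) = B \<longleftrightarrow> A$1$1 = B$1$1 \<and> A$1$2 = B$1$2 \<and> A$2$1 = B$2$1 \<and> A$2$2 = B$2$2"
  by (auto simp: vec_eq_iff forall_2)

lemma matrix_mult_mat2_nth [simp]: "((A::mat2) ** B) $ i $ j = A$i$1 * B$1$j + A$i$2 * B$2$j"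
  by (simp add: matrix_matrix_mult_def sum_2)

lemma trace_mat2: "trace (A::mat2) = A$1$1 + A$2$2"
  by (simp add: trace_def sum_2)

lemma inner_mat2:
  "inner (P::mat2) Q = inner (P$1$1) (Q$1$1) + inner (P$1$2) (Q$1$2) + inner (P$2$1) (Q$2$1) + inner (P$2$2) (Q$2$2)"
  by (simp add: inner_vec_def sum_2)

lemma scaleR_mat2_nth [simp]: "(t *\<^sub>R (P::mat2)) $ i $ j = of_real t * P$i$j"
  by simp (simp add: scaleR_conv_of_real)

lemma cmul_nth [simp]: "cmul a M $ i $ j = a * M$i$j"
  by (simp add: cmul_def)

lemma commut_nth [simp]: "commut A B $ i $ j = (A ** B - B ** A) $ i $ j"
  by (simp add: commut_def)

lemma sl2_iff: "A \<in> sl2 \<longleftrightarrow> A$2$2 = - A$1$1"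
  by (auto simp: sl2_def trace_mat2 eq_neg_iff_add_eq_0 add.commute)

lemma commut_in_sl2: "commut A B \<in> sl2"
  by (simp add: sl2_iff algebra_simps)

lemma cmul_in_sl2: "A \<in> sl2 \<Longrightarrow> cmul a A \<in> sl2"
  by (simp add: sl2_iff)

lemma diff_in_sl2: "A \<in> sl2 \<Longrightarrow> B \<in> sl2 \<Longrightarrow> A - B \<in> sl2"
  by (simp add: sl2_iff)

lemma linear_commut: "linear (commut B)"
  by (rule linearI) (simp_all add: mat2_eq_iff algebra_simps)

lemma linear_cmul_complex: "linear (cmul a)"
  by (rule linearI) (simp_all add: mat2_eq_iff algebra_simps)

lemma commut_diff_left: "commut (A - B) X = commut A X - commut B X"
  by (simp add: mat2_eq_iff algebra_simps)

lemma commut_cmul_left: "commut (cmul a B) X = cmul a (commut B X)"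
  by (simp add: mat2_eq_iff algebra_simps)

lemma commut_jacobi: "commut (commut B A) X = commut B (commut A X) - commut A (commut B X)"
  by (simp add: mat2_eq_iff algebra_simps)

lemma trace_mult_commute: "trace ((A::mat2) ** B) = trace (B ** A)"
  by (simp add: trace_mat2 algebra_simps)

lemma cmul_ii: "cmul \<i> (cmul \<i> P) = - P"
  by (simp add: mat2_eq_iff)

lemma inner_cmul_ii: "inner (cmul \<i> P) (cmul \<i> Q) = inner P Q"
  by (simp add: inner_mat2 inner_complex_def algebra_simps)

lemma inner_cmul_i_right: "inner P (cmul \<i> Q) = - inner (cmul \<i> P) Q"
  by (simp add: inner_mat2 inner_complex_def algebra_simps)

lemma inner_cmul_i_self: "inner P (cmul \<i> P) = 0"
  by (simp add: inner_mat2 inner_complex_def algebra_simps)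

lemma eta_eq_inner: "eta k X = 4 * k\<^sup>2 * inner X X"
  by (simp add: eta_def kill_neg_def sigma_def trace_mat2 inner_mat2 inner_complex_def
      algebra_simps power2_eq_square)

section \<open>Parametrising the nilpotent orbit\<close>

text \<open>Every non-zero nilpotent is \<open>nilmat u v = (u,v)\<^sup>T (v,-u)\<close> for some \<open>(u,v) \<noteq> 0\<close>, and
  \<open>nilmat_tan u v a b\<close> is the derivative of \<open>nilmat\<close> at \<open>(u,v)\<close> in the direction \<open>(a,b)\<close>.\<close>

definition nilmat :: "complex \<Rightarrow> complex \<Rightarrow> mat2" where
  "nilmat u v = mat2_of (u * v) (- u\<^sup>2) (v\<^sup>2) (- (u * v))"

definition nilmat_tan :: "complex \<Rightarrow> complex \<Rightarrow> complex \<Rightarrow> complex \<Rightarrow> mat2" where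
  "nilmat_tan u v a b = mat2_of (a * v + u * b) (- (2 * u * a)) (2 * v * b) (- (a * v + u * b))"

lemma nilmat_in_nilorb: "u \<noteq> 0 \<or> v \<noteq> 0 \<Longrightarrow> nilmat u v \<in> nilorb"
  by (auto simp: nilorb_def nilmat_def sl2_iff mat2_eq_iff algebra_simps power2_eq_square)

lemma nilorbE:
  assumes "X \<in> nilorb"
  obtains u v where "u \<noteq> 0 \<or> v \<noteq> 0" "X = nilmat u v"
proof -
  define a b c where "a = X$1$1" and "b = X$1$2" and "c = X$2$1"
  have d: "X$2$2 = - a" using assms by (simp add: nilorb_def sl2_iff a_def)
  have "(X ** X) $ 1 $ 1 = 0" using assms by (simp add: nilorb_def)
  then have det: "a * a + b * c = 0" by (simp add: a_def b_def c_def)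
  have "X \<noteq> 0" using assms by (simp add: nilorb_def)
  show thesis
  proof (cases "b = 0")
    case True
    then have "a = 0" using det by simp
    then have "c \<noteq> 0" using \<open>X \<noteq> 0\<close> True d by (auto simp: mat2_eq_iff a_def b_def c_def)
    have "X = nilmat 0 (csqrt c)" using True \<open>a = 0\<close> d by (simp add: nilmat_def mat2_eq_iff a_def b_def c_def)
    moreover have "csqrt c \<noteq> 0" using \<open>c \<noteq> 0\<close> by simp
    ultimately show thesis using that by blast
  next
    case False
    define u where "u = csqrt (- b)"
    have u2: "u\<^sup>2 = - b" by (simp add: u_def)
    have "u \<noteq> 0" using u2 False by auto
    have "(a / u)\<^sup>2 = c"
      using \<open>u \<noteq> 0\<close> u2 det False by (simp add: power_divide field_simps power2_eq_square)
        (metis add_eq_0_iff mult.commute)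
    then have "X = nilmat u (a / u)"
      using \<open>u \<noteq> 0\<close> u2 d by (simp add: nilmat_def mat2_eq_iff a_def b_def c_def)
    then show thesis using that \<open>u \<noteq> 0\<close> by blast
  qed
qed

lemma commut_nilmat:
  "A \<in> sl2 \<Longrightarrow> commut A (nilmat u v) = nilmat_tan u v (A$1$1 * u + A$1$2 * v) (A$2$1 * u + A$2$2 * v)"
  by (simp add: sl2_iff nilmat_def nilmat_tan_def mat2_eq_iff algebra_simps power2_eq_square)

lemma nilmat_tan_inj:
  assumes "u \<noteq> 0 \<or> v \<noteq> 0" and "nilmat_tan u v a b = nilmat_tan u v a' b'"
  shows "a = a'" "b = b'"
proof -
  have "a * v + u * b = a' * v + u * b'" "u * a = u * a'" "v * b = v * b'"
    using assms(2) by (simp_all add: nilmat_tan_def mat2_eq_iff)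
  then show "a = a'" "b = b'" using assms(1) by (cases "u = 0"; auto)+
qed

lemma cmul_nilmat_tan: "cmul z (nilmat_tan u v a b) = nilmat_tan u v (z * a) (z * b)"
  by (simp add: nilmat_tan_def mat2_eq_iff algebra_simps)

lemma nilmat_tan_half: "nilmat_tan u v (u / 2) (v / 2) = nilmat u v"
  by (simp add: nilmat_tan_def nilmat_def mat2_eq_iff power2_eq_square)

lemma inner_nilmat: "inner (nilmat u v) (nilmat u v) = ((cmod u)\<^sup>2 + (cmod v)\<^sup>2)\<^sup>2"
  unfolding inner_mat2 inner_complex_def cmod_power2 by (simp add: nilmat_def power2_eq_square) algebra

lemma inner_nilmat_tan:
  "inner (nilmat_tan u v z1 z2) (nilmat_tan u v w1 w2)
     = 2 * (((cmod u)\<^sup>2 + (cmod v)\<^sup>2) * Re (cnj z1 * w1 + cnj z2 * w2)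
            + Re ((cnj z1 * u + cnj z2 * v) * (cnj u * w1 + cnj v * w2)))"
  unfolding inner_mat2 inner_complex_def cmod_power2 by (simp add: nilmat_tan_def power2_eq_square) algebra

lemma inner_nilmat_nilmat_tan:
  "inner (nilmat u v) (nilmat_tan u v z1 z2) = 2 * ((cmod u)\<^sup>2 + (cmod v)\<^sup>2) * Re (cnj u * z1 + cnj v * z2)"
  unfolding inner_mat2 inner_complex_def cmod_power2
  by (simp add: nilmat_def nilmat_tan_def power2_eq_square) algebra

lemma trace_nilmat_tan_mult:
  "A \<in> sl2 \<Longrightarrow> trace (nilmat_tan u v z1 z2 ** A) = 2 * (z2 * (A$1$1 * u + A$1$2 * v) - z1 * (A$2$1 * u + A$2$2 * v))"
  by (simp add: sl2_iff trace_mat2 nilmat_tan_def algebra_simps)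

lemma trace_mult_nilmat:
  "A \<in> sl2 \<Longrightarrow> trace (A ** nilmat u v) = v * (A$1$1 * u + A$1$2 * v) - u * (A$2$1 * u + A$2$2 * v)"
  by (simp add: sl2_iff trace_mat2 nilmat_def algebra_simps power2_eq_square)

lemma commut_in_tang: "A \<in> sl2 \<Longrightarrow> commut A X \<in> tang X"
  unfolding tang_def xi_def by blast

lemma tgen: assumes "Y \<in> tang X" shows "tgen X Y \<in> sl2" "commut (tgen X Y) X = Y"
proof -
  have "\<exists>A. A \<in> sl2 \<and> xi A X = Y" using assms unfolding tang_def by blast
  then have "tgen X Y \<in> sl2 \<and> xi (tgen X Y) X = Y" unfolding tgen_def by (rule someI_ex)
  then show "tgen X Y \<in> sl2" "commut (tgen X Y) X = Y" by (auto simp: xi_def)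
qed

lemma tang_diff: assumes "Y \<in> tang X" "Z \<in> tang X" shows "Y - Z \<in> tang X"
  using commut_in_tang[OF diff_in_sl2[OF tgen(1)[OF assms(1)] tgen(1)[OF assms(2)]], of X]
  by (simp add: commut_diff_left tgen(2) assms)

lemma tang_cmul: assumes "Y \<in> tang X" shows "cmul a Y \<in> tang X"
  using commut_in_tang[OF cmul_in_sl2[OF tgen(1)[OF assms]], of a X]
  by (simp add: commut_cmul_left tgen(2) assms)

lemma tang_nilmatE:
  assumes "Y \<in> tang (nilmat u v)"
  obtains a b where "Y = nilmat_tan u v a b"
  using tgen[OF assms] commut_nilmat by metis

lemma nilmat_tan_in_tang:
  assumes uv: "u \<noteq> 0 \<or> v \<noteq> 0" shows "nilmat_tan u v a b \<in> tang (nilmat u v)"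
proof -
  obtain A where "A \<in> sl2" "commut A (nilmat u v) = nilmat_tan u v a b"
  proof (cases "u = 0")
    case False
    let ?A = "mat2_of (a / u) 0 ((b + a / u * v) / u) (- (a / u))"
    have "?A \<in> sl2" by (simp add: sl2_iff)
    moreover have "commut ?A (nilmat u v) = nilmat_tan u v a b"
      using \<open>?A \<in> sl2\<close> False by (simp add: commut_nilmat field_simps)
    ultimately show thesis using that by blast
  next
    case True
    then have "v \<noteq> 0" using uv by simp
    let ?A = "mat2_of (- b / v) (a / v) 0 (b / v)"
    have "?A \<in> sl2" by (simp add: sl2_iff)
    moreover have "commut ?A (nilmat u v) = nilmat_tan u v a b"
      using \<open>?A \<in> sl2\<close> True \<open>v \<noteq> 0\<close> by (simp add: commut_nilmat field_simps)
    ultimately show thesis using that by blast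
  qed
  then show ?thesis using commut_in_tang by metis
qed

lemma nilorb_in_tang: "X \<in> nilorb \<Longrightarrow> X \<in> tang X"
  by (elim nilorbE) (metis nilmat_tan_in_tang nilmat_tan_half)

text \<open>The stabiliser of a nilpotent \<open>X\<close> is orthogonal to \<open>X\<close>, so \<open>tr (A X)\<close> depends only on \<open>[A, X]\<close>.\<close>

lemma trace_mult_eq_if_commut_eq:
  assumes "X \<in> nilorb" "A \<in> sl2" "B \<in> sl2" "commut A X = commut B X"
  shows "trace (A ** X) = trace (B ** X)"
proof -
  obtain u v where uv: "u \<noteq> 0 \<or> v \<noteq> 0" "X = nilmat u v" using nilorbE[OF assms(1)] .
  have "nilmat_tan u v (A$1$1 * u + A$1$2 * v) (A$2$1 * u + A$2$2 * v)
      = nilmat_tan u v (B$1$1 * u + B$1$2 * v) (B$2$1 * u + B$2$2 * v)"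
    using assms(4) uv(2) commut_nilmat[OF assms(2)] commut_nilmat[OF assms(3)] by simp
  from nilmat_tan_inj[OF uv(1) this] show ?thesis
    using uv(2) trace_mult_nilmat[OF assms(2)] trace_mult_nilmat[OF assms(3)] by simp
qed

lemma omegac_eq_trace:
  assumes "Y \<in> tang X" "Z \<in> tang X"
  shows "omegac X Z Y = 4 * trace (Z ** tgen X Y)"
proof -
  have "omegac X Z Y = - 4 * trace (X ** commut (tgen X Z) (tgen X Y))"
    by (simp add: omegac_def kill_neg_def)
  also have "\<dots> = 4 * trace (commut (tgen X Z) X ** tgen X Y)"
    by (simp add: trace_mat2 algebra_simps)
  finally show ?thesis using tgen(2)[OF assms(2)] by simp
qed

section \<open>Derivatives along the orbit\<close>

lemma nilorb_quadratic_curve: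
  fixes u v a b w1 w2 :: complex
  assumes "\<And>t::real. u + of_real t * a + (of_real t)\<^sup>2 * w1 \<noteq> 0 \<or> v + of_real t * b + (of_real t)\<^sup>2 * w2 \<noteq> 0"
  shows "\<exists>\<gamma>. range \<gamma> \<subseteq> nilorb \<and> \<gamma> 0 = nilmat u v \<and> (\<gamma> has_vector_derivative nilmat_tan u v a b) (at 0)"
proof -
  define \<gamma> where "\<gamma> t = nilmat (u + of_real t * a + (of_real t)\<^sup>2 * w1) (v + of_real t * b + (of_real t)\<^sup>2 * w2)" for t :: real
  define Q2 where "Q2 = mat2_of (a * b + u * w2 + w1 * v) (- (a\<^sup>2 + 2 * u * w1)) (b\<^sup>2 + 2 * v * w2) (- (a * b + u * w2 + w1 * v))"
  define Q3 where "Q3 = mat2_of (a * w2 + w1 * b) (- (2 * a * w1)) (2 * b * w2) (- (a * w2 + w1 * b))"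
  have "\<gamma> = (\<lambda>t. nilmat u v + t *\<^sub>R nilmat_tan u v a b + t\<^sup>2 *\<^sub>R Q2 + (t ^ 3) *\<^sub>R Q3 + (t ^ 4) *\<^sub>R nilmat w1 w2)"
    by (rule ext, simp add: \<gamma>_def Q2_def Q3_def nilmat_def nilmat_tan_def mat2_eq_iff del: scaleR_mat2_nth)
      (simp only: scaleR_conv_of_real of_real_power,
       simp add: algebra_simps power2_eq_square power3_eq_cube power4_eq_xxxx)
  then have "(\<gamma> has_vector_derivative nilmat_tan u v a b) (at 0)"
    by (auto intro!: derivative_eq_intros)
  moreover have "range \<gamma> \<subseteq> nilorb" using assms by (auto simp: \<gamma>_def intro!: nilmat_in_nilorb)
  ultimately show ?thesis by (metis \<gamma>_def of_real_0 add_0_right mult_zero_left zero_power2)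
qed

text \<open>A straight line through \<open>(u,v)\<close> stays away from \<open>0\<close> unless its direction is
  a complex multiple \<open>\<mu> (u,v)\<close>; then a quadratic term \<open>t\<^sup>2 s (u,v)\<close> moves it off \<open>0\<close>.\<close>

lemma nilorb_curve_exists:
  assumes X: "X \<in> nilorb" and V: "V \<in> tang X"
  shows "\<exists>\<gamma>. range \<gamma> \<subseteq> nilorb \<and> \<gamma> 0 = X \<and> (\<gamma> has_vector_derivative V) (at 0)"
proof -
  obtain u v where uv: "u \<noteq> 0 \<or> v \<noteq> 0" "X = nilmat u v" using nilorbE[OF X] .
  obtain a b where ab: "V = nilmat_tan u v a b" using tang_nilmatE V uv(2) by metis
  show ?thesis
  proof (cases "\<exists>\<mu>. a = \<mu> * u \<and> b = \<mu> * v")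
    case False
    have "u + of_real t * a \<noteq> 0 \<or> v + of_real t * b \<noteq> 0" for t :: real
    proof (rule ccontr)
      assume "\<not> ?thesis"
      then have e: "u + t * a = 0" "v + t * b = 0" by auto
      then have "t \<noteq> 0" using uv(1) by auto
      then have "a = (- 1 / t) * u \<and> b = (- 1 / t) * v"
        using e by (auto simp: field_simps add_eq_0_iff)
      then show False using False by blast
    qed
    then show ?thesis using nilorb_quadratic_curve[of u a 0 v b 0] uv ab by simp
  next
    case True
    then obtain \<mu> where \<mu>: "a = \<mu> * u" "b = \<mu> * v" by blast
    define s where "s = (if Im \<mu> = 0 then \<i> else 0)"
    have "u + of_real t * a + (of_real t)\<^sup>2 * (s * u) \<noteq> 0 \<or> v + of_real t * b + (of_real t)\<^sup>2 * (s * v) \<noteq> 0"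
      for t :: real
    proof (rule ccontr)
      assume "\<not> ?thesis"
      then have "(1 + of_real t * \<mu> + (of_real t)\<^sup>2 * s) * u = 0" "(1 + of_real t * \<mu> + (of_real t)\<^sup>2 * s) * v = 0"
        by (auto simp: \<mu> algebra_simps)
      then have z: "1 + of_real t * \<mu> + (of_real t)\<^sup>2 * s = 0" using uv(1) by auto
      have "Im (1 + of_real t * \<mu> + (of_real t)\<^sup>2 * s) = (if Im \<mu> = 0 then t\<^sup>2 else t * Im \<mu>)" by (simp add: s_def)
      then have "t = 0" using z by (auto split: if_splits)
      then show False using z by simp
    qed
    from nilorb_quadratic_curve[OF this] show ?thesis using uv ab by simp
  qed
qed

lemma tderiv_eq:
  assumes X: "X \<in> nilorb" and V: "V \<in> tang X" and H: "(H has_derivative H') (at X)"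
    and h_eq: "\<And>p. p \<in> nilorb \<Longrightarrow> h p = H p"
  shows "tderiv h X V = H' V"
proof -
  have deriv_along: "((h \<circ> \<gamma>) has_real_derivative H' V) (at 0)"
    if \<gamma>: "range \<gamma> \<subseteq> nilorb" "\<gamma> 0 = X" "(\<gamma> has_vector_derivative V) (at 0)" for \<gamma>
  proof -
    have "h \<circ> \<gamma> = H \<circ> \<gamma>" using \<gamma>(1) h_eq by (auto simp: fun_eq_iff)
    have "(\<gamma> has_derivative (\<lambda>t. t *\<^sub>R V)) (at 0)"
      using \<gamma>(3) by (simp add: has_vector_derivative_def)
    from diff_chain_at[OF this] have "((H \<circ> \<gamma>) has_derivative (H' \<circ> (\<lambda>t. t *\<^sub>R V))) (at 0)"
      using H \<gamma>(2) by simp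
    moreover have "H' \<circ> (\<lambda>t. t *\<^sub>R V) = (*) (H' V)"
      using linear_cmul[OF has_derivative_linear[OF H]] by (auto simp: fun_eq_iff)
    ultimately show ?thesis using \<open>h \<circ> \<gamma> = H \<circ> \<gamma>\<close> by (simp add: has_field_derivative_def)
  qed
  obtain \<gamma> where \<gamma>: "range \<gamma> \<subseteq> nilorb" "\<gamma> 0 = X" "(\<gamma> has_vector_derivative V) (at 0)"
    using nilorb_curve_exists[OF X V] by blast
  show ?thesis unfolding tderiv_def
  proof (rule the_equality)
    fix w
    assume "\<forall>\<gamma>. range \<gamma> \<subseteq> nilorb \<and> \<gamma> 0 = X \<and> (\<gamma> has_vector_derivative V) (at 0)
              \<longrightarrow> ((h \<circ> \<gamma>) has_real_derivative w) (at 0)"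
    then have "((h \<circ> \<gamma>) has_real_derivative w) (at 0)" using \<gamma> by blast
    then show "w = H' V" using deriv_along[OF \<gamma>] by (rule DERIV_unique)
  qed (use deriv_along in blast)
qed

lemma lie_bracket_xi: "lie_bracket (xi A) (xi B) X = commut (commut B A) X"
proof -
  have "frechet_derivative (xi C) (at X) = xi C" for C
    using frechet_derivative_at[OF linear_imp_has_derivative[OF linear_commut[of C]]]
    by (simp add: xi_def[abs_def])
  then show ?thesis unfolding lie_bracket_def by (simp add: xi_def commut_jacobi)
qed

lemma ext_d_xi:
  assumes X: "X \<in> nilorb" and A: "A \<in> sl2" and B: "B \<in> sl2"
    and F: "\<And>C p. C \<in> sl2 \<Longrightarrow> p \<in> nilorb \<Longrightarrow> \<alpha> p (commut C p) = F C p"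
    and FA: "(F A has_derivative FA') (at X)" and FB: "(F B has_derivative FB') (at X)"
  shows "ext_d \<alpha> (xi A) (xi B) X = FB' (commut A X) - FA' (commut B X) - F (commut B A) X"
proof -
  have "tderiv (\<lambda>p. \<alpha> p (xi B p)) X (xi A X) = FB' (commut A X)"
    using tderiv_eq[OF X commut_in_tang[OF A] FB] F[OF B] by (simp add: xi_def)
  moreover have "tderiv (\<lambda>p. \<alpha> p (xi A p)) X (xi B X) = FA' (commut B X)"
    using tderiv_eq[OF X commut_in_tang[OF B] FA] F[OF A] by (simp add: xi_def)
  ultimately show ?thesis
    unfolding ext_d_def lie_bracket_xi using F[OF commut_in_sl2 X] by simp
qed

lemma antiderivative_inverse_sqrt:
  fixes g :: "real \<Rightarrow> real"
  assumes "\<And>s. s > 0 \<Longrightarrow> (g has_real_derivative a / sqrt s) (at s)"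
  shows "\<exists>C. \<forall>s>0. g s = 2 * a * sqrt s + C"
proof -
  have "((\<lambda>s. g s - 2 * a * sqrt s) has_real_derivative 0) (at s within {0<..})" if "s \<in> {0<..}" for s
  proof -
    have "s > 0" using that by simp
    have "((\<lambda>s. g s - 2 * a * sqrt s) has_real_derivative a / sqrt s - 2 * a * (inverse (sqrt s) / 2)) (at s)"
      by (intro DERIV_diff DERIV_cmult DERIV_real_sqrt assms \<open>s > 0\<close>)
    then show ?thesis by (simp add: field_simps has_field_derivative_at_within)
  qed
  from has_field_derivative_zero_constant[OF convex_real_interval(3) this]
  obtain C where "\<forall>s\<in>{0<..}. g s - 2 * a * sqrt s = C" by blast
  then show ?thesis by (metis add.commute diff_add_cancel greaterThan_iff)
qed

section \<open>Rank-one perturbations of the identity on \<open>\<complex>\<^sup>2\<close>\<close>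

definition nsq :: "complex \<Rightarrow> complex \<Rightarrow> real" where
  "nsq u v = (cmod u)\<^sup>2 + (cmod v)\<^sup>2"

lemma nsq_pos: "u \<noteq> 0 \<or> v \<noteq> 0 \<Longrightarrow> nsq u v > 0"
  by (auto simp: nsq_def add_pos_nonneg add_nonneg_pos)

lemma cnj_mult_add_cnj_mult_self: "cnj u * u + cnj v * v = of_real (nsq u v)"
  unfolding nsq_def cmod_power2 by (simp add: complex_eq_iff power2_eq_square)

lemma cauchy_schwarz_complex2: "(cmod (cnj u * z1 + cnj v * z2))\<^sup>2 \<le> nsq u v * nsq z1 z2"
proof -
  have "nsq u v * nsq z1 z2 - (cmod (cnj u * z1 + cnj v * z2))\<^sup>2 = (cmod (u * z2 - v * z1))\<^sup>2"
    unfolding nsq_def cmod_power2 by (simp add: power2_eq_square) algebra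
  then show ?thesis by (metis diff_ge_0_iff_ge zero_le_power2)
qed

lemma rank_one_perturbation_pos:
  fixes P B R S q :: real
  assumes "P > 0" "P + B * R > 0" "0 \<le> q" "q \<le> R * S" "S > 0"
  shows "P * S + B * q > 0"
proof (cases "B \<ge> 0")
  case True
  then show ?thesis using assms by (simp add: add_pos_nonneg)
next
  case False
  then have "B * q \<ge> B * (R * S)" using assms(4) by (simp add: mult_le_cancel_left)
  moreover have "(P + B * R) * S > 0" using assms by simp
  ultimately show ?thesis by (simp add: algebra_simps)
qed

text \<open>Sherman-Morrison: \<open>P I + B w w\<^sup>*\<close> with \<open>w = (u,v)\<close> is inverted by
  \<open>(I - B w w\<^sup>* / (P + B |w|\<^sup>2)) / P\<close>.\<close>

lemma rank_one_perturbation_solve: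
  fixes P B :: real and u v n1 n2 :: complex
  assumes P: "P \<noteq> 0" and PB: "P + B * nsq u v \<noteq> 0"
  obtains w1 w2 where
    "of_real P * w1 + of_real B * u * (cnj u * w1 + cnj v * w2) = n1"
    "of_real P * w2 + of_real B * v * (cnj u * w1 + cnj v * w2) = n2"
proof -
  define x where "x = (cnj u * n1 + cnj v * n2) / of_real (P + B * nsq u v)"
  define w1 where "w1 = (n1 - of_real B * u * x) / of_real P"
  define w2 where "w2 = (n2 - of_real B * v * x) / of_real P"
  have x: "x * of_real (P + B * nsq u v) = cnj u * n1 + cnj v * n2"
    using PB by (simp add: x_def del: of_real_add)
  have "cnj u * w1 + cnj v * w2 = (cnj u * n1 + cnj v * n2 - of_real B * (cnj u * u + cnj v * v) * x) / of_real P"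
    using P by (simp add: w1_def w2_def field_simps)
  also have "\<dots> = (x * of_real (P + B * nsq u v) - of_real B * of_real (nsq u v) * x) / of_real P"
    by (simp only: x cnj_mult_add_cnj_mult_self)
  also have "\<dots> = x"
    using P by (simp add: field_simps)
  finally have "cnj u * w1 + cnj v * w2 = x" .
  moreover have "of_real P * w1 = n1 - of_real B * u * x" "of_real P * w2 = n2 - of_real B * v * x"
    using P by (simp_all add: w1_def w2_def)
  ultimately show thesis by (intro that[of w1 w2]) simp_all
qed

section \<open>The Kaehler structures of a potential \<open>f \<circ> \<eta>\<close>\<close>

locale orbit_potential =
  fixes k c :: real and f :: "real \<Rightarrow> real" and \<rho> :: "mat2 \<Rightarrow> real"
  assumes k_pos: "k > 0" and c_nonneg: "c \<ge> 0"
    and f_deriv: "\<And>s. s > 0 \<Longrightarrow> (f has_real_derivative (sqrt (k\<^sup>2 * s + c) / s)) (at s)"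
    and \<rho>_eq: "\<And>X. X \<in> nilorb \<Longrightarrow> \<rho> X = f (eta k X)"
begin

definition df :: "real \<Rightarrow> real" where
  "df s = sqrt (k\<^sup>2 * s + c) / s"

definition ddf :: "real \<Rightarrow> real" where
  "ddf s = k\<^sup>2 / (2 * s * sqrt (k\<^sup>2 * s + c)) - sqrt (k\<^sup>2 * s + c) / s\<^sup>2"

lemma sqrt_k2s_c_pos: "s > 0 \<Longrightarrow> sqrt (k\<^sup>2 * s + c) > 0"
  using k_pos c_nonneg by (simp add: add_pos_nonneg)

lemma df_pos: "s > 0 \<Longrightarrow> df s > 0"
  using sqrt_k2s_c_pos by (simp add: df_def)

lemma df_has_derivative:
  assumes s: "s > 0" shows "(df has_real_derivative ddf s) (at s)"
proof -
  have "k\<^sup>2 * s + c > 0" using k_pos c_nonneg s by (simp add: add_pos_nonneg)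
  from DERIV_real_sqrt[OF this]
  have "((\<lambda>s. sqrt (k\<^sup>2 * s + c)) has_real_derivative inverse (sqrt (k\<^sup>2 * s + c)) / 2 * k\<^sup>2) (at s)"
    by (rule DERIV_chain2) (auto intro!: derivative_eq_intros)
  from DERIV_quotient[OF this DERIV_ident] show ?thesis unfolding df_def[abs_def]
    by (rule DERIV_cong) (use s sqrt_k2s_c_pos[OF s] in \<open>simp_all add: ddf_def field_simps power2_eq_square\<close>)
qed

lemma df_add_ddf: "s > 0 \<Longrightarrow> df s + s * ddf s = k\<^sup>2 / (2 * sqrt (k\<^sup>2 * s + c))"
  using sqrt_k2s_c_pos by (simp add: df_def ddf_def field_simps power2_eq_square)

lemma df_add_ddf_pos: "s > 0 \<Longrightarrow> df s + s * ddf s > 0"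
  using df_add_ddf sqrt_k2s_c_pos k_pos by simp

lemma eta_pos: "X \<in> nilorb \<Longrightarrow> eta k X > 0"
  using k_pos by (auto simp: eta_eq_inner nilorb_def)

lemma has_derivative_eta: "((\<lambda>q. 4 * k\<^sup>2 * inner q q) has_derivative (\<lambda>W. 8 * k\<^sup>2 * inner X W)) (at X)"
  by (auto intro!: derivative_eq_intros simp: fun_eq_iff inner_commute algebra_simps)

lemma tderiv_\<rho>:
  assumes X: "X \<in> nilorb" and V: "V \<in> tang X"
  shows "tderiv \<rho> X V = df (eta k X) * (8 * k\<^sup>2 * inner X V)"
proof (rule tderiv_eq[OF X V])
  have "(f has_derivative (*) (df (eta k X))) (at (4 * k\<^sup>2 * inner X X))"
    using f_deriv[OF eta_pos[OF X]] by (simp add: has_field_derivative_def df_def eta_eq_inner)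
  from has_derivative_compose[OF has_derivative_eta this]
  show "((\<lambda>q. f (4 * k\<^sup>2 * inner q q)) has_derivative (\<lambda>W. df (eta k X) * (8 * k\<^sup>2 * inner X W))) (at X)" .
qed (simp add: \<rho>_eq eta_eq_inner)

definition alphaI :: "mat2 \<Rightarrow> mat2 \<Rightarrow> real" where
  "alphaI C q = - (df (4 * k\<^sup>2 * inner q q) * (8 * k\<^sup>2 * inner q (cmul \<i> (commut C q))))"

definition alphaI' :: "mat2 \<Rightarrow> mat2 \<Rightarrow> mat2 \<Rightarrow> real" where
  "alphaI' C X W = - (df (4 * k\<^sup>2 * inner X X) * (8 * k\<^sup>2 * (inner X (cmul \<i> (commut C W)) + inner W (cmul \<i> (commut C X))))
      + ddf (4 * k\<^sup>2 * inner X X) * (8 * k\<^sup>2 * inner X W) * (8 * k\<^sup>2 * inner X (cmul \<i> (commut C X))))"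

lemma Ldrho_Iop_commut:
  assumes "C \<in> sl2" "p \<in> nilorb" shows "Ldrho Iop \<rho> p (commut C p) = alphaI C p"
proof -
  have "cmul \<i> (commut C p) = commut (cmul \<i> C) p" by (simp add: commut_cmul_left)
  moreover have "commut (cmul \<i> C) p \<in> tang p" by (rule commut_in_tang[OF cmul_in_sl2[OF assms(1)]])
  ultimately show ?thesis
    by (simp add: Ldrho_def Iop_def alphaI_def tderiv_\<rho>[OF assms(2)] eta_eq_inner)
qed

lemma alphaI_has_derivative:
  assumes X: "X \<in> nilorb" shows "(alphaI C has_derivative alphaI' C X) (at X)"
proof -
  have "4 * k\<^sup>2 * inner X X > 0" using eta_pos[OF X] by (simp add: eta_eq_inner)
  from has_derivative_compose[OF has_derivative_eta df_has_derivative[OF this, unfolded has_field_derivative_def]]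
  have d1: "((\<lambda>q. df (4 * k\<^sup>2 * inner q q)) has_derivative
      (\<lambda>W. ddf (4 * k\<^sup>2 * inner X X) * (8 * k\<^sup>2 * inner X W))) (at X)"
    by (simp add: mult.commute)
  have "bounded_linear (\<lambda>q. cmul \<i> (commut C q))"
    using linear_compose[OF linear_commut linear_cmul_complex] by (simp add: o_def linear_conv_bounded_linear)
  then have d2: "((\<lambda>q. inner q (cmul \<i> (commut C q))) has_derivative
      (\<lambda>W. inner X (cmul \<i> (commut C W)) + inner W (cmul \<i> (commut C X)))) (at X)"
    by (rule has_derivative_inner[OF has_derivative_ident bounded_linear.has_derivative[OF _ has_derivative_ident]])
  from has_derivative_minus[OF has_derivative_mult[OF d1 has_derivative_mult_right[OF d2]]]
  show ?thesis unfolding alphaI_def[abs_def] alphaI'_def[abs_def] by (simp only: add.commute)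
qed

lemma omegaI_eq:
  assumes X: "X \<in> nilorb" and Y: "Y \<in> tang X" and Z: "Z \<in> tang X"
  shows "omegaI \<rho> X Y Z
    = 32 * k^4 * ddf (eta k X) * (inner X Y * inner X (cmul \<i> Z) - inner X Z * inner X (cmul \<i> Y))
      + 8 * k\<^sup>2 * df (eta k X) * inner Y (cmul \<i> Z)"
proof -
  define A B where "A = tgen X Y" and "B = tgen X Z"
  have A: "A \<in> sl2" "commut A X = Y" using tgen[OF Y] by (simp_all add: A_def)
  have B: "B \<in> sl2" "commut B X = Z" using tgen[OF Z] by (simp_all add: B_def)
  have jacobi: "inner X (cmul \<i> (commut (commut B A) X))
      = inner X (cmul \<i> (commut B Y)) - inner X (cmul \<i> (commut A Z))"
    using A B by (simp add: commut_jacobi linear_diff[OF linear_cmul_complex] inner_diff_right)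
  have skew: "inner Z (cmul \<i> Y) = - inner Y (cmul \<i> Z)"
    using inner_cmul_i_right[of Z Y] by (simp add: inner_commute)
  have "omegaI \<rho> X Y Z = - 1/2 * ext_d (Ldrho Iop \<rho>) (xi A) (xi B) X"
    by (simp add: omegaI_def dform_def A_def B_def)
  also have "\<dots> = - 1/2 * (alphaI' B X Y - alphaI' A X Z - alphaI (commut B A) X)"
    using ext_d_xi[where F = alphaI, OF X A(1) B(1) Ldrho_Iop_commut
        alphaI_has_derivative[OF X] alphaI_has_derivative[OF X]]
    by (simp add: A(2) B(2))
  also have "\<dots> = 32 * k^4 * ddf (eta k X) * (inner X Y * inner X (cmul \<i> Z) - inner X Z * inner X (cmul \<i> Y))
      + 8 * k\<^sup>2 * df (eta k X) * inner Y (cmul \<i> Z)"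
    unfolding alphaI'_def alphaI_def A(2) B(2) jacobi skew eta_eq_inner
    by (simp add: algebra_simps power2_eq_square power4_eq_xxxx)
  finally show ?thesis .
qed

lemma gmet_eq:
  assumes X: "X \<in> nilorb" and Y: "Y \<in> tang X" and Z: "Z \<in> tang X"
  shows "gmet \<rho> X Y Z = 8 * k\<^sup>2 * df (eta k X) * inner Y Z
     + 32 * k^4 * ddf (eta k X) * (inner X Y * inner X Z + inner X (cmul \<i> Y) * inner X (cmul \<i> Z))"
  unfolding gmet_def Iop_def omegaI_eq[OF X tang_cmul[OF Y] Z]
  by (simp add: cmul_ii inner_cmul_ii algebra_simps)

lemma gmet_diff:
  assumes X: "X \<in> nilorb" and "Z \<in> tang X" "W1 \<in> tang X" "W2 \<in> tang X"
  shows "gmet \<rho> X Z (W1 - W2) = gmet \<rho> X Z W1 - gmet \<rho> X Z W2"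
  using assms tang_diff
  by (simp add: gmet_eq inner_diff_right linear_diff[OF linear_cmul_complex] algebra_simps)

lemma eta_nilmat: "eta k (nilmat u v) = 4 * k\<^sup>2 * (nsq u v)\<^sup>2"
  by (simp add: eta_eq_inner inner_nilmat nsq_def)

text \<open>In the coordinates \<open>z = (z\<^sub>1, z\<^sub>2)\<close> of \<open>nilmat_tan u v z\<^sub>1 z\<^sub>2\<close>, the metric at \<open>nilmat u v\<close>
  is the real part of the Hermitian form \<open>gram_diag u v \<cdot> I + gram_rank1 u v \<cdot> w w\<^sup>*\<close>, \<open>w = (u,v)\<close>.\<close>

definition gram_diag :: "complex \<Rightarrow> complex \<Rightarrow> real" where
  "gram_diag u v = 16 * k\<^sup>2 * df (eta k (nilmat u v)) * nsq u v"

definition gram_rank1 :: "complex \<Rightarrow> complex \<Rightarrow> real" where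
  "gram_rank1 u v = 16 * k\<^sup>2 * df (eta k (nilmat u v)) + 128 * k^4 * ddf (eta k (nilmat u v)) * (nsq u v)\<^sup>2"

lemma gmet_nilmat:
  assumes uv: "u \<noteq> 0 \<or> v \<noteq> 0"
  shows "gmet \<rho> (nilmat u v) (nilmat_tan u v z1 z2) (nilmat_tan u v w1 w2)
    = gram_diag u v * Re (cnj z1 * w1 + cnj z2 * w2)
      + gram_rank1 u v * Re ((cnj z1 * u + cnj z2 * v) * (cnj u * w1 + cnj v * w2))"
proof -
  define D D' R where "D = df (eta k (nilmat u v))" and "D' = ddf (eta k (nilmat u v))" and "R = nsq u v"
  define p q where "p = cnj u * z1 + cnj v * z2" and "q = cnj u * w1 + cnj v * w2"
  have ip: "cnj u * (\<i> * z1) + cnj v * (\<i> * z2) = \<i> * p" by (simp add: p_def algebra_simps)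
  have iq: "cnj u * (\<i> * w1) + cnj v * (\<i> * w2) = \<i> * q" by (simp add: q_def algebra_simps)
  have "gmet \<rho> (nilmat u v) (nilmat_tan u v z1 z2) (nilmat_tan u v w1 w2)
      = 8 * k\<^sup>2 * D * (2 * (R * Re (cnj z1 * w1 + cnj z2 * w2) + Re (cnj p * q)))
        + 32 * k^4 * D' * ((2 * R * Re p) * (2 * R * Re q) + (2 * R * Re (\<i> * p)) * (2 * R * Re (\<i> * q)))"
    unfolding gmet_eq[OF nilmat_in_nilorb[OF uv] nilmat_tan_in_tang[OF uv] nilmat_tan_in_tang[OF uv]]
      cmul_nilmat_tan inner_nilmat_tan inner_nilmat_nilmat_tan ip iq
    by (simp add: D_def D'_def R_def nsq_def p_def q_def algebra_simps)
  also have "(2 * R * Re p) * (2 * R * Re q) + (2 * R * Re (\<i> * p)) * (2 * R * Re (\<i> * q))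
      = 4 * R\<^sup>2 * Re (cnj p * q)"
    by (simp add: algebra_simps power2_eq_square)
  finally show ?thesis
    by (simp add: gram_diag_def gram_rank1_def D_def D'_def R_def p_def q_def algebra_simps)
qed

lemma gram_diag_pos: "u \<noteq> 0 \<or> v \<noteq> 0 \<Longrightarrow> gram_diag u v > 0"
  using df_pos[OF eta_pos[OF nilmat_in_nilorb]] nsq_pos k_pos by (simp add: gram_diag_def)

lemma gram_pos:
  assumes uv: "u \<noteq> 0 \<or> v \<noteq> 0" shows "gram_diag u v + gram_rank1 u v * nsq u v > 0"
proof -
  let ?s = "eta k (nilmat u v)"
  have "gram_diag u v + gram_rank1 u v * nsq u v = 32 * k\<^sup>2 * nsq u v * (df ?s + ?s * ddf ?s)"
    unfolding gram_diag_def gram_rank1_def eta_nilmat[of u v]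
    by (simp add: algebra_simps power2_eq_square power4_eq_xxxx)
  then show ?thesis
    using df_add_ddf_pos[OF eta_pos[OF nilmat_in_nilorb[OF uv]]] nsq_pos[OF uv] k_pos by simp
qed

lemma gmet_definite:
  assumes X: "X \<in> nilorb" and D: "D \<in> tang X" and "gmet \<rho> X D D = 0"
  shows "D = 0"
proof -
  obtain u v where uv: "u \<noteq> 0 \<or> v \<noteq> 0" "X = nilmat u v" using nilorbE[OF X] .
  obtain z1 z2 where z: "D = nilmat_tan u v z1 z2" using tang_nilmatE D uv(2) by metis
  define S p where "S = nsq z1 z2" and "p = cnj u * z1 + cnj v * z2"
  have "cnj z1 * u + cnj z2 * v = cnj p" by (simp add: p_def)
  then have "gmet \<rho> X D D = gram_diag u v * Re (cnj z1 * z1 + cnj z2 * z2) + gram_rank1 u v * Re (cnj p * p)"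
    by (simp only: uv(2) z gmet_nilmat[OF uv(1)] p_def[symmetric])
  also have "\<dots> = gram_diag u v * S + gram_rank1 u v * (cmod p)\<^sup>2"
    unfolding S_def cnj_mult_add_cnj_mult_self cmod_power2 by (simp add: power2_eq_square)
  finally have "gram_diag u v * S + gram_rank1 u v * (cmod p)\<^sup>2 = 0" using assms(3) by simp
  moreover have "(cmod p)\<^sup>2 \<le> nsq u v * S"
    using cauchy_schwarz_complex2[of u z1 v z2] by (simp add: p_def S_def)
  then have "gram_diag u v * S + gram_rank1 u v * (cmod p)\<^sup>2 > 0" if "S > 0"
    using rank_one_perturbation_pos[OF gram_diag_pos[OF uv(1)] gram_pos[OF uv(1)] zero_le_power2 _ that]
    by blast
  ultimately have "\<not> S > 0" by auto
  then have "z1 = 0" "z2 = 0" using nsq_pos[of z1 z2] by (auto simp: S_def)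
  then show ?thesis using z by (simp add: nilmat_tan_def mat2_eq_iff)
qed

definition omega_mu :: "complex \<Rightarrow> mat2 \<Rightarrow> mat2 \<Rightarrow> mat2 \<Rightarrow> real" where
  "omega_mu \<mu> X Y Z = Re (\<mu> * (of_real (k\<^sup>2) * omegac X Y Z))"

lemma omegaJ_eq_omega_mu: "omegaJ k = omega_mu 1"
  by (simp add: fun_eq_iff omegaJ_def omega_mu_def)

lemma omegaK_eq_omega_mu: "omegaK k = omega_mu (- \<i>)"
  by (simp add: fun_eq_iff omegaK_def omega_mu_def)

lemma Lop_omega_mu_exists:
  assumes X: "X \<in> nilorb" and Y: "Y \<in> tang X"
  shows "\<exists>W\<in>tang X. \<forall>Z\<in>tang X. gmet \<rho> X Z W = omega_mu \<mu> X Z Y"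
proof -
  obtain u v where uv: "u \<noteq> 0 \<or> v \<noteq> 0" "X = nilmat u v" using nilorbE[OF X] .
  define A where "A = tgen X Y"
  define a b where "a = A$1$1 * u + A$1$2 * v" and "b = A$2$1 * u + A$2$2 * v"
  obtain w1 w2 where w:
    "of_real (gram_diag u v) * w1 + of_real (gram_rank1 u v) * u * (cnj u * w1 + cnj v * w2)
       = - cnj (of_real (8 * k\<^sup>2) * \<mu> * b)"
    "of_real (gram_diag u v) * w2 + of_real (gram_rank1 u v) * v * (cnj u * w1 + cnj v * w2)
       = cnj (of_real (8 * k\<^sup>2) * \<mu> * a)"
    using rank_one_perturbation_solve gram_diag_pos[OF uv(1)] gram_pos[OF uv(1)] by (metis less_irrefl)
  have "gmet \<rho> X Z (nilmat_tan u v w1 w2) = omega_mu \<mu> X Z Y" if Z: "Z \<in> tang X" for Z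
  proof -
    obtain z1 z2 where z: "Z = nilmat_tan u v z1 z2" using tang_nilmatE Z uv(2) by metis
    have "gmet \<rho> X Z (nilmat_tan u v w1 w2)
        = gram_diag u v * Re (cnj z1 * w1 + cnj z2 * w2)
          + gram_rank1 u v * Re ((cnj z1 * u + cnj z2 * v) * (cnj u * w1 + cnj v * w2))"
      using gmet_nilmat[OF uv(1)] uv(2) z by simp
    also have "\<dots> = Re (cnj z1 * (of_real (gram_diag u v) * w1 + of_real (gram_rank1 u v) * u * (cnj u * w1 + cnj v * w2))
            + cnj z2 * (of_real (gram_diag u v) * w2 + of_real (gram_rank1 u v) * v * (cnj u * w1 + cnj v * w2)))"
      by (simp add: algebra_simps)
    also have "\<dots> = Re (of_real (8 * k\<^sup>2) * \<mu> * (z2 * a - z1 * b))"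
      unfolding w by (simp add: algebra_simps)
    also have "\<dots> = omega_mu \<mu> X Z Y"
      unfolding omega_mu_def omegac_eq_trace[OF Y Z] A_def[symmetric]
      unfolding z trace_nilmat_tan_mult[OF tgen(1)[OF Y, folded A_def]]
      by (simp add: a_def b_def algebra_simps)
    finally show ?thesis .
  qed
  then show ?thesis using nilmat_tan_in_tang[OF uv(1)] uv(2) by blast
qed

lemma Lop_omega_mu:
  assumes X: "X \<in> nilorb" and Y: "Y \<in> tang X"
  shows "Lop (omega_mu \<mu>) \<rho> X Y \<in> tang X"
    and "\<And>Z. Z \<in> tang X \<Longrightarrow> gmet \<rho> X Z (Lop (omega_mu \<mu>) \<rho> X Y) = omega_mu \<mu> X Z Y"
proof -
  have "\<exists>!W. W \<in> tang X \<and> (\<forall>Z\<in>tang X. gmet \<rho> X Z W = omega_mu \<mu> X Z Y)"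
  proof (rule ex_ex1I)
    fix W1 W2
    assume W1: "W1 \<in> tang X \<and> (\<forall>Z\<in>tang X. gmet \<rho> X Z W1 = omega_mu \<mu> X Z Y)"
      and W2: "W2 \<in> tang X \<and> (\<forall>Z\<in>tang X. gmet \<rho> X Z W2 = omega_mu \<mu> X Z Y)"
    then have "W1 - W2 \<in> tang X" by (simp add: tang_diff)
    moreover from this have "gmet \<rho> X (W1 - W2) (W1 - W2) = 0"
      using gmet_diff[OF X] W1 W2 by simp
    ultimately have "W1 - W2 = 0" by (rule gmet_definite[OF X])
    then show "W1 = W2" by simp
  qed (use Lop_omega_mu_exists[OF X Y] in blast)
  then have "Lop (omega_mu \<mu>) \<rho> X Y \<in> tang X
      \<and> (\<forall>Z\<in>tang X. gmet \<rho> X Z (Lop (omega_mu \<mu>) \<rho> X Y) = omega_mu \<mu> X Z Y)"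
    unfolding Lop_def by (rule theI')
  then show "Lop (omega_mu \<mu>) \<rho> X Y \<in> tang X"
    and "\<And>Z. Z \<in> tang X \<Longrightarrow> gmet \<rho> X Z (Lop (omega_mu \<mu>) \<rho> X Y) = omega_mu \<mu> X Z Y"
    by blast+
qed

text \<open>Pairing with \<open>Z = X\<close>, where \<open>X \<bottom> i X\<close>, isolates the \<open>X\<close>-component of \<open>L Y\<close>.\<close>

lemma inner_Lop_omega_mu:
  assumes X: "X \<in> nilorb" and B: "B \<in> sl2"
  shows "inner X (Lop (omega_mu \<mu>) \<rho> X (commut B X))
    = Re (\<mu> * trace (B ** X)) / (2 * (df (eta k X) + eta k X * ddf (eta k X)))"
proof -
  define Y W where "Y = commut B X" and "W = Lop (omega_mu \<mu>) \<rho> X Y"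
  define d r where "d = df (eta k X) + eta k X * ddf (eta k X)" and "r = Re (\<mu> * trace (B ** X))"
  have Y: "Y \<in> tang X" by (simp add: Y_def commut_in_tang[OF B])
  have XX: "X \<in> tang X" by (rule nilorb_in_tang[OF X])
  have "trace (X ** tgen X Y) = trace (B ** X)"
    using trace_mult_eq_if_commut_eq[OF X tgen(1)[OF Y] B] tgen(2)[OF Y]
    by (simp add: Y_def trace_mult_commute[of X])
  then have "omega_mu \<mu> X X Y = 4 * k\<^sup>2 * r"
    by (simp add: omega_mu_def omegac_eq_trace[OF Y XX] r_def algebra_simps)
  moreover have "gmet \<rho> X X W = 8 * k\<^sup>2 * d * inner X W"
    using gmet_eq[OF X XX Lop_omega_mu(1)[OF X Y]]
    by (simp add: W_def d_def inner_cmul_i_self eta_eq_inner algebra_simps power2_eq_square power4_eq_xxxx)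
  moreover have "gmet \<rho> X X W = omega_mu \<mu> X X Y"
    unfolding W_def by (rule Lop_omega_mu(2)[OF X Y XX])
  ultimately have "4 * k\<^sup>2 * (2 * d * inner X W) = 4 * k\<^sup>2 * r" by (auto simp: algebra_simps)
  then have "2 * d * inner X W = r" using k_pos by (simp only: mult_cancel_left) simp
  moreover have "d > 0" unfolding d_def by (rule df_add_ddf_pos[OF eta_pos[OF X]])
  ultimately have "inner X W = r / (2 * d)" by (simp add: field_simps)
  then show ?thesis by (simp add: W_def Y_def d_def r_def)
qed

definition psi :: "real \<Rightarrow> real" where
  "psi s = - (8 * (k\<^sup>2 * s + c) / s)"

definition dpsi :: "real \<Rightarrow> real" where
  "dpsi s = 8 * c / s\<^sup>2"

lemma psi_eq_df:
  assumes s: "s > 0" shows "psi s = - (df s * (8 * k\<^sup>2) / (2 * (df s + s * ddf s)))"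
proof -
  define S where "S = sqrt (k\<^sup>2 * s + c)"
  have "S > 0" using sqrt_k2s_c_pos[OF s] by (simp add: S_def)
  have S2: "S * S = k\<^sup>2 * s + c" using c_nonneg s by (simp add: S_def)
  have "df s * (8 * k\<^sup>2) / (2 * (df s + s * ddf s)) = S / s * (8 * k\<^sup>2) / (2 * (k\<^sup>2 / (2 * S)))"
    unfolding df_add_ddf[OF s] by (simp add: df_def S_def)
  also have "\<dots> = 8 * (S * S) / s" using \<open>S > 0\<close> s k_pos by (simp add: field_simps)
  finally show ?thesis by (simp add: psi_def S2)
qed

lemma psi_has_derivative:
  assumes s: "s > 0" shows "(psi has_real_derivative dpsi s) (at s)"
proof -
  have "((\<lambda>s. 8 * (k\<^sup>2 * s + c)) has_real_derivative 8 * k\<^sup>2) (at s)"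
    by (auto intro!: derivative_eq_intros)
  from DERIV_minus[OF DERIV_quotient[OF this DERIV_ident]] show ?thesis
    unfolding psi_def[abs_def]
    by (rule DERIV_cong) (use s in \<open>simp_all add: dpsi_def field_simps power2_eq_square\<close>)
qed

definition alphaJ :: "complex \<Rightarrow> mat2 \<Rightarrow> mat2 \<Rightarrow> real" where
  "alphaJ \<mu> C q = psi (4 * k\<^sup>2 * inner q q) * Re (\<mu> * trace (C ** q))"

definition alphaJ' :: "complex \<Rightarrow> mat2 \<Rightarrow> mat2 \<Rightarrow> mat2 \<Rightarrow> real" where
  "alphaJ' \<mu> C X W = psi (4 * k\<^sup>2 * inner X X) * Re (\<mu> * trace (C ** W))
     + dpsi (4 * k\<^sup>2 * inner X X) * (8 * k\<^sup>2 * inner X W) * Re (\<mu> * trace (C ** X))"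

lemma Ldrho_Lop_omega_mu_commut:
  assumes C: "C \<in> sl2" and p: "p \<in> nilorb"
  shows "Ldrho (Lop (omega_mu \<mu>) \<rho>) \<rho> p (commut C p) = alphaJ \<mu> C p"
proof -
  have "Ldrho (Lop (omega_mu \<mu>) \<rho>) \<rho> p (commut C p)
      = - (df (eta k p) * (8 * k\<^sup>2 * inner p (Lop (omega_mu \<mu>) \<rho> p (commut C p))))"
    unfolding Ldrho_def tderiv_\<rho>[OF p Lop_omega_mu(1)[OF p commut_in_tang[OF C]]] ..
  also have "\<dots> = psi (eta k p) * Re (\<mu> * trace (C ** p))"
    unfolding inner_Lop_omega_mu[OF p C] psi_eq_df[OF eta_pos[OF p]] by simp
  finally show ?thesis by (simp add: alphaJ_def eta_eq_inner)
qed

lemma alphaJ_has_derivative: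
  assumes X: "X \<in> nilorb" shows "(alphaJ \<mu> C has_derivative alphaJ' \<mu> C X) (at X)"
proof -
  have "4 * k\<^sup>2 * inner X X > 0" using eta_pos[OF X] by (simp add: eta_eq_inner)
  from has_derivative_compose[OF has_derivative_eta psi_has_derivative[OF this, unfolded has_field_derivative_def]]
  have d1: "((\<lambda>q. psi (4 * k\<^sup>2 * inner q q)) has_derivative
      (\<lambda>W. dpsi (4 * k\<^sup>2 * inner X X) * (8 * k\<^sup>2 * inner X W))) (at X)"
    by (simp add: mult.commute)
  have "bounded_linear (\<lambda>q::mat2. Re (\<mu> * trace (C ** q)))"
    unfolding linear_conv_bounded_linear[symmetric]
    by (rule linearI) (simp_all add: trace_mat2 algebra_simps)
  from has_derivative_mult[OF d1 bounded_linear.has_derivative[OF this has_derivative_ident]]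
  show ?thesis unfolding alphaJ_def[abs_def] alphaJ'_def[abs_def] by (simp only: add.commute)
qed

text \<open>The defect of \<open>\<rho>\<close> as a Kaehler potential for \<open>\<omega>\<^sub>\<mu>\<close>: both correction terms carry a factor \<open>c\<close>.\<close>

lemma kahler_form_Lop_omega_mu:
  assumes X: "X \<in> nilorb" and Y: "Y \<in> tang X" and Z: "Z \<in> tang X"
  shows "- 1/2 * dform (Ldrho (Lop (omega_mu \<mu>) \<rho>) \<rho>) X Y Z
    = omega_mu \<mu> X Y Z + c / eta k X * Re (\<mu> * omegac X Y Z)
      - 4 * k\<^sup>2 * dpsi (eta k X) * (inner X Y * Re (\<mu> * trace (tgen X Z ** X))
                                   - inner X Z * Re (\<mu> * trace (tgen X Y ** X)))"
proof -
  define A B where "A = tgen X Y" and "B = tgen X Z"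
  have A: "A \<in> sl2" "commut A X = Y" using tgen[OF Y] by (simp_all add: A_def)
  have B: "B \<in> sl2" "commut B X = Z" using tgen[OF Z] by (simp_all add: B_def)
  define m where "m = Re (\<mu> * omegac X Y Z)"
  have "trace (commut B A ** X) = trace (B ** Y) - trace (A ** Z) + trace (X ** commut A B)"
    unfolding A(2)[symmetric] B(2)[symmetric] by (simp add: trace_mat2 algebra_simps)
  moreover have "omegac X Y Z = - 4 * trace (X ** commut A B)"
    by (simp add: omegac_def kill_neg_def A_def B_def)
  ultimately have "trace (commut B A ** X) = trace (B ** Y) - trace (A ** Z) - omegac X Y Z / 4"
    by simp
  then have m: "Re (\<mu> * trace (commut B A ** X))
      = Re (\<mu> * trace (B ** Y)) - Re (\<mu> * trace (A ** Z)) - m / 4"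
    by (simp add: m_def right_diff_distrib)
  have "- 1/2 * dform (Ldrho (Lop (omega_mu \<mu>) \<rho>) \<rho>) X Y Z
      = - 1/2 * (alphaJ' \<mu> B X Y - alphaJ' \<mu> A X Z - alphaJ \<mu> (commut B A) X)"
    using ext_d_xi[where F = "alphaJ \<mu>", OF X A(1) B(1) Ldrho_Lop_omega_mu_commut
        alphaJ_has_derivative[OF X] alphaJ_has_derivative[OF X]]
    by (simp add: dform_def A_def[symmetric] B_def[symmetric] A(2) B(2))
  also have "\<dots> = - psi (eta k X) / 8 * m
      - 4 * k\<^sup>2 * dpsi (eta k X) * (inner X Y * Re (\<mu> * trace (B ** X)) - inner X Z * Re (\<mu> * trace (A ** X)))"
    unfolding alphaJ'_def alphaJ_def m eta_eq_inner by (simp add: algebra_simps)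
  also have "- psi (eta k X) / 8 * m = omega_mu \<mu> X Y Z + c / eta k X * m"
    using eta_pos[OF X] by (simp add: psi_def omega_mu_def m_def field_simps)
  finally show ?thesis by (simp add: A_def B_def m_def)
qed

lemma kahler_pot_for_omega_mu_if_c_eq_0:
  assumes "c = 0" shows "kahler_pot_for (omega_mu \<mu>) (Lop (omega_mu \<mu>) \<rho>) \<rho>"
  unfolding kahler_pot_for_def
proof (intro ballI)
  fix X Y Z assume X: "X \<in> nilorb" and Y: "Y \<in> tang X" and Z: "Z \<in> tang X"
  show "omega_mu \<mu> X Y Z = - 1/2 * dform (Ldrho (Lop (omega_mu \<mu>) \<rho>) \<rho>) X Y Z"
    unfolding kahler_form_Lop_omega_mu[OF X Y Z] dpsi_def using assms by simp
qed

text \<open>A witness at \<open>X = nilmat 1 0\<close>: two tangent vectors orthogonal to \<open>X\<close> with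
  \<open>\<omega>\<^sub>c(Y, Z) = 8\<close>, so only the \<open>c / \<eta>\<close> term of the defect survives.\<close>

lemma not_kahler_pot_for_omegaJ_if_c_pos:
  assumes "c > 0" shows "\<not> kahler_pot_for (omega_mu 1) (Lop (omega_mu 1) \<rho>) \<rho>"
proof
  assume kahler: "kahler_pot_for (omega_mu 1) (Lop (omega_mu 1) \<rho>) \<rho>"
  define X A B where "X = nilmat 1 0" and "A = mat2_of \<i> 0 0 (- \<i>)" and "B = mat2_of 0 0 \<i> 0"
  define Y Z where "Y = commut A X" and "Z = commut B X"
  have X: "X \<in> nilorb" by (simp add: X_def nilmat_in_nilorb)
  have Y: "Y \<in> tang X" and Z: "Z \<in> tang X"
    by (simp_all add: Y_def Z_def commut_in_tang A_def B_def sl2_iff)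
  have "inner X Y = 0" "inner X Z = 0"
    by (simp_all add: X_def Y_def Z_def A_def B_def nilmat_def inner_mat2 inner_complex_def)
  have "tgen X Z $ 2 $ 1 = \<i>"
    using arg_cong[OF tgen(2)[OF Z], of "\<lambda>M. M$1$1"] by (simp add: X_def Z_def B_def nilmat_def)
  then have "omegac X Y Z = 8"
    unfolding omegac_eq_trace[OF Z Y] by (simp add: trace_mat2 X_def Y_def A_def nilmat_def)
  moreover have "omega_mu 1 X Y Z = - 1/2 * dform (Ldrho (Lop (omega_mu 1) \<rho>) \<rho>) X Y Z"
    using kahler X Y Z unfolding kahler_pot_for_def by blast
  ultimately show False
    using kahler_form_Lop_omega_mu[OF X Y Z] \<open>inner X Y = 0\<close> \<open>inner X Z = 0\<close> eta_pos[OF X] assms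
    by simp
qed

lemma hk_potential_iff_c_eq_0: "hk_potential k \<rho> \<longleftrightarrow> c = 0"
proof
  assume "hk_potential k \<rho>"
  then have "kahler_pot_for (omega_mu 1) (Lop (omega_mu 1) \<rho>) \<rho>"
    by (simp add: hk_potential_def Jop_def omegaJ_eq_omega_mu)
  then show "c = 0" using not_kahler_pot_for_omegaJ_if_c_pos c_nonneg by force
next
  assume "c = 0"
  moreover have "kahler_pot_for (omegaI \<rho>) Iop \<rho>" by (simp add: kahler_pot_for_def omegaI_def)
  ultimately show "hk_potential k \<rho>"
    using kahler_pot_for_omega_mu_if_c_eq_0
    by (simp add: hk_potential_def Jop_def Kop_def omegaJ_eq_omega_mu omegaK_eq_omega_mu)
qed

lemma \<rho>_eq_sqrt_eta_if_c_eq_0: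
  assumes "c = 0" shows "\<exists>C. \<forall>X\<in>nilorb. \<rho> X = 2 * k * sqrt (eta k X) + C"
proof -
  have "(f has_real_derivative k / sqrt s) (at s)" if "s > 0" for s
  proof -
    have "sqrt (k\<^sup>2 * s + c) / s = k / sqrt s"
      using that k_pos assms by (simp add: real_sqrt_mult field_simps)
    then show ?thesis using f_deriv[OF that] by simp
  qed
  then obtain C where "\<forall>s>0. f s = 2 * k * sqrt s + C"
    using antiderivative_inverse_sqrt by blast
  then show ?thesis using \<rho>_eq eta_pos by auto
qed

end

lemma cmul_e_mat_in_nilorb: "t \<noteq> 0 \<Longrightarrow> cmul (of_real t) e_mat \<in> nilorb"
  by (simp add: nilorb_def sl2_iff mat2_eq_iff e_mat_def)

lemma eta_cmul_e_mat: "eta k (cmul (of_real t) e_mat) = 4 * k\<^sup>2 * t\<^sup>2"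
  by (simp add: eta_eq_inner inner_mat2 inner_complex_def e_mat_def power2_eq_square)

theorem mainTheorem5:
  fixes k c :: real and f :: "real \<Rightarrow> real" and \<rho> :: "mat2 \<Rightarrow> real"
  assumes "k > 0" and "c \<ge> 0"
    and "\<And>s. s > 0 \<Longrightarrow> (f has_real_derivative (sqrt (k\<^sup>2 * s + c) / s)) (at s)"
    and "\<And>X. X \<in> nilorb \<Longrightarrow> \<rho> X = f (eta k X)"
  shows "(hk_potential k \<rho> \<longleftrightarrow> c = 0)
         \<and> (c = 0 \<longrightarrow> (\<exists>C. (\<forall>X\<in>nilorb. \<rho> X = 2 * k * sqrt (eta k X) + C)
                     \<and> (\<forall>t>0. \<rho> (cmul (of_real t) e_mat) = 4 * k\<^sup>2 * t + C)))"
proof -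
  interpret orbit_potential k c f \<rho> by unfold_locales (use assms in auto)
  have "\<exists>C. (\<forall>X\<in>nilorb. \<rho> X = 2 * k * sqrt (eta k X) + C)
            \<and> (\<forall>t>0. \<rho> (cmul (of_real t) e_mat) = 4 * k\<^sup>2 * t + C)" if c0: "c = 0"
  proof -
    obtain C where C: "\<forall>X\<in>nilorb. \<rho> X = 2 * k * sqrt (eta k X) + C"
      using \<rho>_eq_sqrt_eta_if_c_eq_0[OF c0] by blast
    moreover have "\<rho> (cmul (of_real t) e_mat) = 4 * k\<^sup>2 * t + C" if "t > 0" for t
      using C cmul_e_mat_in_nilorb[of t] eta_cmul_e_mat[of k t] that \<open>k > 0\<close>
      by (simp add: real_sqrt_mult power2_eq_square)
    ultimately show ?thesis by blast
  qed
  then show ?thesis using hk_potential_iff_c_eq_0 by blast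
qed

end
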